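(* Let $A$ be a row-finite $\omega\times\omega$ complex matrix with finite deficiency, and let $H=(h_{ij})=QA$ be a quasi-Hermite form of $A$ ($Q$ nonsingular row-finite). Let $j_0<j_1<\cdots$ be the indices of the nonzero rows of $H$ and $\mu_n=\ell(H_{j_n})$, and let $S=\omega\setminus\{\mu_0,\mu_1,\dots\}$ (the inaccessible row-lengths). For $s\in S$ define $\xi^{(s)}\in\mathbb{C}^\omega$ by $\xi^{(s)}_s=1$, $\xi^{(s)}_{\mu_n}=-h_{j_n s}$ for all $n$, and $\xi^{(s)}_t=0$ for $t\in S\setminus\{s\}$. Then $\{\xi^{(s)}\}_{s\in S}$ is a finite basis of the solution space $RNS(A)=\{y\in\mathbb{C}^\omega: Ay=0\}$; every $x\in RNS(A)$ equals $\sum_{s\in S}x_s\xi^{(s)}$, and $\dim RNS(A)=\operatorname{def}(A)$.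
   Context: $\omega=\{0,1,2,\dots\}$; $\mathbb{C}^\omega$ is the space of all complex sequences; $(Ay)_n=\sum_k a_{nk}y_k$. Row-finite: finitely many nonzero entries per row; nonsingular: invertible in the algebra of row-finite matrices. Length $\ell(x)$ of a finitely supported $x\neq0$: largest index of a nonzero coordinate. Quasi-Hermite form: with $J$ the indices of nonzero rows and $\ell_j=\ell(H_j)$, (i) $j<j'$ in $J$ implies $\ell_j<\ell_{j'}$; (ii) $h_{j\ell_j}=1$; (iii) $h_{m\ell_j}=0$ for all $m\neq j$. $\operatorname{def}(A)$ is the codimension of the row space of $A$ in the space of finitely supported sequences; it equals $\operatorname{card}(S)$. *)

theory Defs
  imports Complex_Main "HOL-Library.Function_Algebras"
begin

definition cscale :: "complex \<Rightarrow> (nat \<Rightarrow> complex) \<Rightarrow> (nat \<Rightarrow> complex)" where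
  "cscale c f = (\<lambda>t. c * f t)"

abbreviation cspan :: "(nat \<Rightarrow> complex) set \<Rightarrow> (nat \<Rightarrow> complex) set" where
  "cspan \<equiv> module.span cscale"

abbreviation cindependent :: "(nat \<Rightarrow> complex) set \<Rightarrow> bool" where
  "cindependent S \<equiv> \<not> module.dependent cscale S"

abbreviation cdim :: "(nat \<Rightarrow> complex) set \<Rightarrow> nat" where
  "cdim \<equiv> vector_space.dim cscale"

definition fin_supp :: "(nat \<Rightarrow> complex) \<Rightarrow> bool" where
  "fin_supp x \<longleftrightarrow> finite {k. x k \<noteq> 0}"

definition FS :: "(nat \<Rightarrow> complex) set" where
  "FS = {x. fin_supp x}"

definition row_finite :: "(nat \<Rightarrow> nat \<Rightarrow> complex) \<Rightarrow> bool" where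
  "row_finite A \<longleftrightarrow> (\<forall>n. finite {k. A n k \<noteq> 0})"

definition mmult :: "(nat \<Rightarrow> nat \<Rightarrow> complex) \<Rightarrow> (nat \<Rightarrow> nat \<Rightarrow> complex) \<Rightarrow> (nat \<Rightarrow> nat \<Rightarrow> complex)" where
  "mmult P Q = (\<lambda>i k. \<Sum>j\<in>{j. P i j \<noteq> 0}. P i j * Q j k)"

definition mvec :: "(nat \<Rightarrow> nat \<Rightarrow> complex) \<Rightarrow> (nat \<Rightarrow> complex) \<Rightarrow> (nat \<Rightarrow> complex)" where
  "mvec A y = (\<lambda>n. \<Sum>k\<in>{k. A n k \<noteq> 0}. A n k * y k)"

definition idm :: "nat \<Rightarrow> nat \<Rightarrow> complex" where
  "idm = (\<lambda>i k. if i = k then 1 else 0)"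

definition nonsingular :: "(nat \<Rightarrow> nat \<Rightarrow> complex) \<Rightarrow> bool" where
  "nonsingular Q \<longleftrightarrow> row_finite Q \<and>
     (\<exists>P. row_finite P \<and> mmult P Q = idm \<and> mmult Q P = idm)"

definition len :: "(nat \<Rightarrow> complex) \<Rightarrow> nat" where
  "len x = Max {k. x k \<noteq> 0}"

definition nonzero_rows :: "(nat \<Rightarrow> nat \<Rightarrow> complex) \<Rightarrow> nat set" where
  "nonzero_rows H = {j. H j \<noteq> (\<lambda>_. 0)}"

definition quasi_hermite :: "(nat \<Rightarrow> nat \<Rightarrow> complex) \<Rightarrow> bool" where
  "quasi_hermite H \<longleftrightarrow> row_finite H \<and>
     (\<forall>j\<in>nonzero_rows H. \<forall>j'\<in>nonzero_rows H. j < j' \<longrightarrow> len (H j) < len (H j')) \<and>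
     (\<forall>j\<in>nonzero_rows H. H j (len (H j)) = 1) \<and>
     (\<forall>j\<in>nonzero_rows H. \<forall>m. m \<noteq> j \<longrightarrow> H m (len (H j)) = 0)"

definition row_space :: "(nat \<Rightarrow> nat \<Rightarrow> complex) \<Rightarrow> (nat \<Rightarrow> complex) set" where
  "row_space A = cspan (range A)"

text \<open>Codimension of the row space in FS: the least number of finitely supported sequences
  which, added to the row space, span FS.  Finite deficiency: such a finite set exists.\<close>
definition finite_deficiency :: "(nat \<Rightarrow> nat \<Rightarrow> complex) \<Rightarrow> bool" where
  "finite_deficiency A \<longleftrightarrow>
     (\<exists>B. finite B \<and> B \<subseteq> FS \<and> cspan (row_space A \<union> B) = FS)"

definition deficiency :: "(nat \<Rightarrow> nat \<Rightarrow> complex) \<Rightarrow> nat" where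
  "deficiency A = (LEAST n. \<exists>B. finite B \<and> card B = n \<and> B \<subseteq> FS \<and> cspan (row_space A \<union> B) = FS)"

definition RNS :: "(nat \<Rightarrow> nat \<Rightarrow> complex) \<Rightarrow> (nat \<Rightarrow> complex) set" where
  "RNS A = {y. mvec A y = (\<lambda>_. 0)}"

end

theory Submission
  imports Defs
begin

(* Let N be the nonzero rows of the quasi-Hermite form H = QA and S the free columns,
   i.e. those that are not the length (pivot) of a row in N.
   1. A nonsingular left factor does not change the solution space: RNS A = RNS H.
   2. Row j in N of H y = 0 reads  y (pivot j) + sum over free k of H j k * y k = 0.
      Hence every xi_s solves the system, and once S is finite every solution x
      equals the sum over s in S of x s * xi_s.
   3. Solutions annihilate the row space under the pairing dot z y = sum_k z k * y k.
      Consequently, finitely many solutions that form a Kronecker delta on a set T of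
      coordinates make the unit vectors at T independent modulo the row space, so
      card T <= def A.  Applied to finite T within S this shows that S is finite and
      card S <= def A.
   4. The row space together with the unit vectors at S spans all finitely
      supported sequences (a pivot unit vector is a row of H minus free terms),
      so def A <= card S.
   Since the xi_s are a Kronecker delta on S, they are independent, and the theorem
   follows by combining 1-4. *)

section \<open>Complex sequences as a vector space\<close>

lemma cscale_apply: "cscale c f t = c * f t"
  by (simp add: cscale_def)

interpretation cvs: vector_space cscale
  by unfold_locales (auto simp: cscale_def fun_eq_iff algebra_simps)

lemma sum_fun_apply: "(\<Sum>i\<in>I. f i) t = (\<Sum>i\<in>I. f i t)"
  by (induction I rule: infinite_finite_induct) auto

definition coord_vec :: "nat \<Rightarrow> nat \<Rightarrow> complex" where
  "coord_vec k = (\<lambda>t. if t = k then 1 else 0)"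

lemma fin_supp_coord_vec: "fin_supp (coord_vec k)"
proof -
  have "{t. coord_vec k t \<noteq> 0} = {k}" by (auto simp: coord_vec_def)
  then show ?thesis by (simp add: fin_supp_def)
qed

lemma coord_vec_expansion:
  assumes "finite K" and "{k. x k \<noteq> 0} \<subseteq> K"
  shows "x = (\<Sum>k\<in>K. cscale (x k) (coord_vec k))"
proof
  fix t
  have "(\<Sum>k\<in>K. cscale (x k) (coord_vec k)) t = (if t \<in> K then x t else 0)"
    using assms(1) by (simp add: sum_fun_apply cscale_apply coord_vec_def if_distrib sum.delta cong: if_cong)
  then show "x t = (\<Sum>k\<in>K. cscale (x k) (coord_vec k)) t"
    using assms(2) by auto
qed

lemma subspace_FS: "cvs.subspace FS"
proof -
  have "fin_supp (x + y)" if "fin_supp x" "fin_supp y" for x y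
  proof -
    have "{k. (x + y) k \<noteq> 0} \<subseteq> {k. x k \<noteq> 0} \<union> {k. y k \<noteq> 0}" by auto
    then show ?thesis using that unfolding fin_supp_def by (auto intro: finite_subset)
  qed
  moreover have "fin_supp (cscale c x)" if "fin_supp x" for c x
  proof -
    have "{k. cscale c x k \<noteq> 0} \<subseteq> {k. x k \<noteq> 0}" by (auto simp: cscale_apply)
    then show ?thesis using that unfolding fin_supp_def by (auto intro: finite_subset)
  qed
  ultimately show ?thesis
    by (auto simp: cvs.subspace_def FS_def fin_supp_def)
qed

lemma delta_family_independent:
  assumes "finite T" and delta: "\<And>s t. s \<in> T \<Longrightarrow> t \<in> T \<Longrightarrow> v s t = (if s = t then 1 else 0)"
  shows "inj_on v T \<and> cindependent (v ` T)"
proof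
  show inj: "inj_on v T"
  proof (rule inj_onI)
    fix s s' assume "s \<in> T" "s' \<in> T" "v s = v s'"
    then have "v s s = v s' s" by simp
    with delta[OF \<open>s \<in> T\<close> \<open>s \<in> T\<close>] delta[OF \<open>s' \<in> T\<close> \<open>s \<in> T\<close>] show "s = s'"
      by (auto split: if_splits)
  qed
  show "cindependent (v ` T)"
  proof (rule cvs.independent_if_scalars_zero)
    show "finite (v ` T)" using assms(1) by simp
    fix f x assume comb: "(\<Sum>x\<in>v ` T. cscale (f x) x) = 0" and "x \<in> v ` T"
    then obtain s where s: "s \<in> T" "x = v s" by auto
    have "0 = (\<Sum>x\<in>v ` T. cscale (f x) x) s" using comb by simp
    also have "\<dots> = (\<Sum>t\<in>T. f (v t) * (if t = s then 1 else 0))"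
      using delta s(1) by (simp add: sum_fun_apply cscale_apply sum.reindex[OF inj])
    also have "\<dots> = f (v s)" using assms(1) s(1) by (simp add: if_distrib sum.delta cong: if_cong)
    finally show "f x = 0" using s by simp
  qed
qed

lemma span_eq_if_coordinate_expansion:
  assumes "cvs.subspace V" and "v ` S \<subseteq> V"
    and expand: "\<And>x. x \<in> V \<Longrightarrow> x = (\<lambda>t. \<Sum>s\<in>S. x s * v s t)"
  shows "cspan (v ` S) = V"
proof
  show "cspan (v ` S) \<subseteq> V" using assms(1,2) by (rule cvs.span_minimal[rotated])
  show "V \<subseteq> cspan (v ` S)"
  proof
    fix x assume "x \<in> V"
    then have "x = (\<lambda>t. \<Sum>s\<in>S. x s * v s t)" by (rule expand)
    also have "\<dots> = (\<Sum>s\<in>S. cscale (x s) (v s))"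
      by (simp add: fun_eq_iff sum_fun_apply cscale_apply)
    also have "\<dots> \<in> cspan (v ` S)"
      by (intro cvs.span_sum cvs.span_scale cvs.span_base) auto
    finally show "x \<in> cspan (v ` S)" .
  qed
qed

text \<open>Spans in \<open>FS\<close> are preserved by maps that are linear on \<open>FS\<close> only (such as pairing,
  which is meaningless on sequences of infinite support).\<close>

lemma span_image_FS_linear:
  assumes X: "X \<subseteq> FS"
    and lin: "\<And>c x x'. fin_supp x \<Longrightarrow> fin_supp x' \<Longrightarrow> F (cscale c x + x') = cscale c (F x) + F x'"
    and x: "x \<in> cspan X"
  shows "F x \<in> cspan (F ` X)"
proof -
  have "cscale (-1) 0 + 0 = (0 :: nat \<Rightarrow> complex)" by (simp add: cscale_def fun_eq_iff)
  then have "F 0 = cscale (-1) (F 0) + F 0"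
    using lin[of 0 0 "-1"] by (simp add: fin_supp_def)
  then have "F 0 = 0" by (simp add: cscale_def fun_eq_iff)
  have "fin_supp x \<and> F x \<in> cspan (F ` X)"
    using x
  proof (induction rule: cvs.span_induct_alt)
    case base
    have "fin_supp 0" by (simp add: fin_supp_def)
    then show ?case by (simp only: \<open>F 0 = 0\<close> cvs.span_zero)
  next
    case (step c x y)
    then have x: "fin_supp x" "F x \<in> cspan (F ` X)"
      using X by (auto simp: FS_def intro: cvs.span_base)
    have y: "fin_supp y" "F y \<in> cspan (F ` X)" using step by auto
    have "cscale c x + y \<in> FS"
      by (intro cvs.subspace_add cvs.subspace_scale subspace_FS) (simp_all add: FS_def x y)
    moreover have "F (cscale c x + y) \<in> cspan (F ` X)"
      by (simp only: lin[OF x(1) y(1)]) (intro cvs.span_add cvs.span_scale x(2) y(2))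
    ultimately show ?case by (simp add: FS_def plus_fun_def)
  qed
  then show ?thesis by blast
qed

section \<open>Row-finite matrices acting on sequences\<close>

definition dot :: "(nat \<Rightarrow> complex) \<Rightarrow> (nat \<Rightarrow> complex) \<Rightarrow> complex" where
  "dot x y = (\<Sum>k\<in>{k. x k \<noteq> 0}. x k * y k)"

lemma mvec_dot: "mvec A y n = dot (A n) y"
  by (simp add: mvec_def dot_def)

lemma dot_supp_superset:
  assumes "finite K" and "{k. x k \<noteq> 0} \<subseteq> K"
  shows "dot x y = (\<Sum>k\<in>K. x k * y k)"
  unfolding dot_def by (rule sum.mono_neutral_left) (use assms in auto)

lemma dot_linear_left:
  assumes "fin_supp x" and "fin_supp x'"
  shows "dot (cscale c x + x') y = c * dot x y + dot x' y"
proof -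
  let ?K = "{k. x k \<noteq> 0} \<union> {k. x' k \<noteq> 0}"
  have K: "finite ?K" using assms by (simp add: fin_supp_def)
  have "dot (cscale c x + x') y = (\<Sum>k\<in>?K. (cscale c x + x') k * y k)"
    by (rule dot_supp_superset[OF K]) (auto simp: cscale_apply)
  moreover have "dot x y = (\<Sum>k\<in>?K. x k * y k)" by (rule dot_supp_superset[OF K]) auto
  moreover have "dot x' y = (\<Sum>k\<in>?K. x' k * y k)" by (rule dot_supp_superset[OF K]) auto
  ultimately show ?thesis
    by (simp add: cscale_apply sum.distrib sum_distrib_left distrib_right mult.assoc)
qed

lemma dot_coord_vec: "dot (coord_vec k) y = y k"
proof -
  have "{t. coord_vec k t \<noteq> 0} = {k}" by (auto simp: coord_vec_def)
  then show ?thesis by (simp add: dot_def coord_vec_def)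
qed

lemma subspace_RNS: "cvs.subspace (RNS A)"
proof -
  have "mvec A (x + y) = mvec A x + mvec A y" for x y
    by (simp add: mvec_def fun_eq_iff distrib_left sum.distrib)
  moreover have "mvec A (cscale c x) = cscale c (mvec A x)" for c x
    by (simp add: mvec_def fun_eq_iff cscale_apply sum_distrib_left mult.left_commute)
  moreover have "mvec A 0 = 0" by (simp add: mvec_def fun_eq_iff)
  ultimately show ?thesis
    unfolding cvs.subspace_def RNS_def by (simp add: zero_fun_def[symmetric])
qed

lemma mvec_mmult:
  assumes "row_finite P" and "row_finite Q"
  shows "mvec (mmult P Q) x = mvec P (mvec Q x)"
proof
  fix n
  let ?J = "{j. P n j \<noteq> 0}"
  let ?K = "\<Union>j\<in>?J. {k. Q j k \<noteq> 0}"
  have fK: "finite ?K" using assms unfolding row_finite_def by auto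
  have suppPQ: "{k. mmult P Q n k \<noteq> 0} \<subseteq> ?K"
  proof
    fix k assume "k \<in> {k. mmult P Q n k \<noteq> 0}"
    then have "(\<Sum>j\<in>?J. P n j * Q j k) \<noteq> 0" by (simp add: mmult_def)
    then obtain j where "j \<in> ?J" "P n j * Q j k \<noteq> 0"
      by (meson sum.not_neutral_contains_not_neutral)
    then show "k \<in> ?K" by auto
  qed
  have "mvec (mmult P Q) x n = (\<Sum>k\<in>?K. \<Sum>j\<in>?J. P n j * (Q j k * x k))"
    unfolding mvec_dot dot_supp_superset[OF fK suppPQ]
    by (simp add: mmult_def sum_distrib_right mult.assoc)
  also have "\<dots> = (\<Sum>j\<in>?J. P n j * (\<Sum>k\<in>?K. Q j k * x k))"
    by (subst sum.swap) (simp add: sum_distrib_left)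
  also have "\<dots> = (\<Sum>j\<in>?J. P n j * mvec Q x j)"
  proof (intro sum.cong refl)
    fix j assume "j \<in> ?J"
    then have "{k. Q j k \<noteq> 0} \<subseteq> ?K" by auto
    then show "P n j * (\<Sum>k\<in>?K. Q j k * x k) = P n j * mvec Q x j"
      by (simp add: mvec_dot dot_supp_superset[OF fK])
  qed
  finally show "mvec (mmult P Q) x n = mvec P (mvec Q x) n"
    by (simp add: mvec_def)
qed

lemma RNS_nonsingular_mult:
  assumes "nonsingular Q" and "row_finite A"
  shows "RNS (mmult Q A) = RNS A"
proof -
  obtain P where Q: "row_finite Q" and P: "row_finite P" and PQ: "mmult P Q = idm"
    using assms(1) unfolding nonsingular_def by blast
  have idm_supp: "{j. idm i j \<noteq> 0} = {i}" for i by (auto simp: idm_def)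
  have "mvec idm y = y" for y by (simp add: mvec_def idm_supp idm_def)
  then have recover: "mvec A y = mvec P (mvec (mmult Q A) y)" for y
    using mvec_mmult[OF P Q] mvec_mmult[OF Q assms(2)] by (metis PQ)
  have zero: "mvec M (\<lambda>_. 0) = (\<lambda>_. 0)" for M by (simp add: mvec_def)
  have "mvec (mmult Q A) y = (\<lambda>_. 0) \<longleftrightarrow> mvec A y = (\<lambda>_. 0)" for y
    using recover[of y] mvec_mmult[OF Q assms(2), of y] zero by metis
  then show ?thesis by (simp add: RNS_def)
qed

lemma row_space_subset_FS: "row_finite A \<Longrightarrow> row_space A \<subseteq> FS"
  unfolding row_space_def using subspace_FS
  by (intro cvs.span_minimal) (auto simp: FS_def fin_supp_def row_finite_def)

lemma mmult_row_in_row_space: "mmult Q A j \<in> row_space A"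
proof -
  have "mmult Q A j = (\<Sum>i\<in>{i. Q j i \<noteq> 0}. cscale (Q j i) (A i))"
    by (simp add: fun_eq_iff sum_fun_apply cscale_apply mmult_def)
  also have "\<dots> \<in> cspan (range A)"
    by (intro cvs.span_sum cvs.span_scale cvs.span_base) auto
  finally show ?thesis unfolding row_space_def .
qed

section \<open>Solutions bound the deficiency from below\<close>

lemma RNS_annihilates_row_space:
  assumes "row_finite A" and "y \<in> RNS A" and "z \<in> row_space A"
  shows "dot z y = 0"
proof -
  let ?F = "\<lambda>z (_::nat). dot z y"
  have "range A \<subseteq> FS" using assms(1) by (auto simp: FS_def fin_supp_def row_finite_def)
  then have "?F z \<in> cspan (?F ` range A)"
    using assms(3) unfolding row_space_def
    by (intro span_image_FS_linear) (auto simp: dot_linear_left cscale_apply fun_eq_iff)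
  moreover have "?F ` range A \<subseteq> {0}"
    using assms(2) by (auto simp: RNS_def mvec_dot fun_eq_iff)
  ultimately have "?F z \<in> cspan {0}" using cvs.span_mono by blast
  then show ?thesis by (simp add: fun_eq_iff)
qed

lemma deficiency_le:
  assumes "finite B" and "B \<subseteq> FS" and "cspan (row_space A \<union> B) = FS"
  shows "deficiency A \<le> card B"
  unfolding deficiency_def by (rule Least_le) (use assms in \<open>intro exI[of _ B], simp\<close>)

lemma le_deficiency:
  assumes "finite_deficiency A"
    and "\<And>B. finite B \<Longrightarrow> B \<subseteq> FS \<Longrightarrow> cspan (row_space A \<union> B) = FS \<Longrightarrow> n \<le> card B"
  shows "n \<le> deficiency A"
proof -
  let ?P = "\<lambda>m. \<exists>B. finite B \<and> card B = m \<and> B \<subseteq> FS \<and> cspan (row_space A \<union> B) = FS"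
  obtain B0 where "finite B0" "B0 \<subseteq> FS" "cspan (row_space A \<union> B0) = FS"
    using assms(1) unfolding finite_deficiency_def by blast
  then have "?P (card B0)" by (intro exI[of _ B0]) simp
  then have "?P (deficiency A)"
    unfolding deficiency_def by (rule LeastI)
  then obtain B where B: "finite B" "card B = deficiency A" "B \<subseteq> FS"
    "cspan (row_space A \<union> B) = FS" by blast
  show ?thesis using assms(2)[OF B(1,3,4)] B(2) by simp
qed

text \<open>If solutions \<open>y t\<close> (\<open>t \<in> T\<close>) restrict to the Kronecker delta on \<open>T\<close>, the coordinate
  vectors indexed by \<open>T\<close> are independent modulo the row space, so \<open>card T \<le> def A\<close>.
  The functional \<open>x \<mapsto> (t \<mapsto> dot x (y t))\<close> kills the row space and sends these
  coordinate vectors to an independent family.\<close>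

lemma card_le_deficiency:
  assumes "row_finite A" and "finite_deficiency A" and "finite T"
    and sol: "\<And>t. t \<in> T \<Longrightarrow> y t \<in> RNS A"
    and delta: "\<And>s t. s \<in> T \<Longrightarrow> t \<in> T \<Longrightarrow> y t s = (if s = t then 1 else 0)"
  shows "card T \<le> deficiency A"
proof (rule le_deficiency[OF assms(2)])
  fix B assume B: "finite B" "B \<subseteq> FS" "cspan (row_space A \<union> B) = FS"
  define F where "F x = (\<lambda>t. if t \<in> T then dot x (y t) else 0)" for x
  have image: "(\<lambda>s. F (coord_vec s)) ` T \<subseteq> cspan (F ` B)"
  proof (intro image_subsetI)
    fix s
    have "F (coord_vec s) \<in> cspan (F ` (row_space A \<union> B))"
      using B(3) row_space_subset_FS[OF assms(1)] B(2) fin_supp_coord_vec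
      by (intro span_image_FS_linear) (auto simp: FS_def F_def fun_eq_iff cscale_apply dot_linear_left)
    moreover have "F ` (row_space A \<union> B) \<subseteq> insert 0 (F ` B)"
      using RNS_annihilates_row_space[OF assms(1) sol]
      by (auto simp: F_def fun_eq_iff zero_fun_def)
    ultimately show "F (coord_vec s) \<in> cspan (F ` B)"
      using cvs.span_mono cvs.span_insert_0 by blast
  qed
  have indep: "inj_on (\<lambda>s. F (coord_vec s)) T \<and> cindependent ((\<lambda>s. F (coord_vec s)) ` T)"
    using assms(3) by (rule delta_family_independent) (simp add: F_def dot_coord_vec delta)
  have "card T = card ((\<lambda>s. F (coord_vec s)) ` T)"
    using indep card_image by metis
  also have "\<dots> \<le> card (F ` B)"
    using cvs.independent_span_bound[OF _ conjunct2[OF indep] image] B(1) by simp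
  also have "\<dots> \<le> card B" using B(1) by (rule card_image_le)
  finally show "card T \<le> card B" .
qed

section \<open>Quasi-Hermite forms\<close>

definition free_columns :: "(nat \<Rightarrow> nat \<Rightarrow> complex) \<Rightarrow> nat set" where
  "free_columns H = UNIV - (\<lambda>j. len (H j)) ` nonzero_rows H"

lemma pivot_not_free: "j \<in> nonzero_rows H \<Longrightarrow> len (H j) \<notin> free_columns H"
  by (simp add: free_columns_def)

text \<open>Apart from its pivot, a nonzero row of a quasi-Hermite matrix lives on free columns,
  since pivot columns are zero outside their own row.\<close>

lemma qh_offpivot_free:
  assumes "quasi_hermite H" and "j \<in> nonzero_rows H" and "H j k \<noteq> 0" and "k \<noteq> len (H j)"
  shows "k \<in> free_columns H"
proof (rule ccontr)
  assume "k \<notin> free_columns H"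
  then obtain j' where j': "j' \<in> nonzero_rows H" "k = len (H j')"
    by (auto simp: free_columns_def)
  with assms(4) have "j \<noteq> j'" by auto
  then have "H j k = 0" using assms(1) j' unfolding quasi_hermite_def by blast
  with assms(3) show False by simp
qed

lemma qh_row_equation:
  assumes "quasi_hermite H" and "j \<in> nonzero_rows H"
  shows "mvec H x j = x (len (H j)) + (\<Sum>k\<in>{k. H j k \<noteq> 0} - {len (H j)}. H j k * x k)"
proof -
  have pivot: "H j (len (H j)) = 1" and fin: "finite {k. H j k \<noteq> 0}"
    using assms unfolding quasi_hermite_def row_finite_def by blast+
  have "mvec H x j = H j (len (H j)) * x (len (H j))
                     + (\<Sum>k\<in>{k. H j k \<noteq> 0} - {len (H j)}. H j k * x k)"
    unfolding mvec_def by (rule sum.remove[OF fin]) (simp add: pivot)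
  then show ?thesis by (simp add: pivot)
qed

lemma RNS_quasi_hermite:
  assumes "quasi_hermite H"
  shows "x \<in> RNS H \<longleftrightarrow> (\<forall>j\<in>nonzero_rows H.
           x (len (H j)) = - (\<Sum>k\<in>{k. H j k \<noteq> 0} - {len (H j)}. H j k * x k))"
proof -
  have zero_row: "mvec H x j = 0" if "j \<notin> nonzero_rows H" for j
    using that by (simp add: mvec_def nonzero_rows_def)
  have "x \<in> RNS H \<longleftrightarrow> (\<forall>j. mvec H x j = 0)" by (simp add: RNS_def fun_eq_iff)
  also have "\<dots> \<longleftrightarrow> (\<forall>j\<in>nonzero_rows H. mvec H x j = 0)" using zero_row by blast
  finally show ?thesis by (simp add: qh_row_equation[OF assms] eq_neg_iff_add_eq_0)
qed

lemma offpivot_sum_delta: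
  assumes "quasi_hermite H" and "j \<in> nonzero_rows H" and "s \<in> free_columns H"
    and "\<And>t. t \<in> free_columns H \<Longrightarrow> v t = (if t = s then 1 else 0)"
  shows "(\<Sum>k\<in>{k. H j k \<noteq> 0} - {len (H j)}. H j k * v k) = H j s"
proof -
  let ?T = "{k. H j k \<noteq> 0} - {len (H j)}"
  have "finite ?T" using assms(1) by (simp add: quasi_hermite_def row_finite_def)
  have "(\<Sum>k\<in>?T. H j k * v k) = (\<Sum>k\<in>?T. if k = s then H j k else 0)"
    using qh_offpivot_free[OF assms(1,2)] assms(4) by (intro sum.cong) auto
  also have "\<dots> = (if s \<in> ?T then H j s else 0)" using \<open>finite ?T\<close> by simp
  also have "\<dots> = H j s"
    using pivot_not_free[OF assms(2)] assms(3) by auto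
  finally show ?thesis .
qed

lemma xi_solution:
  assumes "quasi_hermite H" and "s \<in> free_columns H"
    and xi_free: "\<And>t. t \<in> free_columns H \<Longrightarrow> \<xi> t = (if t = s then 1 else 0)"
    and xi_pivot: "\<And>j. j \<in> nonzero_rows H \<Longrightarrow> \<xi> (len (H j)) = - H j s"
  shows "\<xi> \<in> RNS H"
  using offpivot_sum_delta[OF assms(1) _ assms(2) xi_free] xi_pivot
  by (simp add: RNS_quasi_hermite[OF assms(1)])

lemma RNS_expansion:
  assumes "quasi_hermite H" and "finite (free_columns H)" and "x \<in> RNS H"
    and xi_free: "\<And>s t. s \<in> free_columns H \<Longrightarrow> t \<in> free_columns H \<Longrightarrow>
                        \<xi> s t = (if t = s then 1 else 0)"
    and xi_pivot: "\<And>s j. s \<in> free_columns H \<Longrightarrow> j \<in> nonzero_rows H \<Longrightarrow> \<xi> s (len (H j)) = - H j s"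
  shows "x = (\<lambda>t. \<Sum>s\<in>free_columns H. x s * \<xi> s t)"
proof
  fix t
  let ?S = "free_columns H"
  show "x t = (\<Sum>s\<in>?S. x s * \<xi> s t)"
  proof (cases "t \<in> ?S")
    case True
    have "(\<Sum>s\<in>?S. x s * \<xi> s t) = (\<Sum>s\<in>?S. if s = t then x s else 0)"
      using True xi_free by (intro sum.cong) auto
    then show ?thesis using assms(2) True by simp
  next
    case False
    then obtain j where j: "j \<in> nonzero_rows H" "t = len (H j)"
      by (auto simp: free_columns_def)
    let ?T = "{k. H j k \<noteq> 0} - {len (H j)}"
    have T_free: "?T \<subseteq> ?S" using qh_offpivot_free[OF assms(1) j(1)] by blast
    have zero_off: "H j k * x k = 0" if "k \<in> ?S - ?T" for k
    proof -
      have "k \<noteq> len (H j)" using that pivot_not_free[OF j(1)] by blast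
      with that show ?thesis by simp
    qed
    have free_sum: "(\<Sum>k\<in>?T. H j k * x k) = (\<Sum>s\<in>?S. H j s * x s)"
      by (rule sum.mono_neutral_left[OF assms(2) T_free]) (use zero_off in blast)
    have "x t = - (\<Sum>k\<in>?T. H j k * x k)"
      using assms(3) j unfolding RNS_quasi_hermite[OF assms(1)] by blast
    also have "\<dots> = - (\<Sum>s\<in>?S. H j s * x s)" by (simp only: free_sum)
    also have "\<dots> = (\<Sum>s\<in>?S. x s * - H j s)"
      by (simp add: sum_negf[symmetric] mult.commute)
    also have "\<dots> = (\<Sum>s\<in>?S. x s * \<xi> s t)"
      using xi_pivot j by simp
    finally show ?thesis .
  qed
qed

text \<open>The row space of \<open>A\<close> together with the unit vectors at the free columns of a
  quasi-Hermite \<open>H\<close> whose rows lie in the row space spans all finitely supported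
  sequences: a pivot unit vector is a row of \<open>H\<close> minus a combination of free unit vectors.\<close>

lemma row_space_free_coords_span:
  assumes "row_finite A" and "quasi_hermite H" and H_rows: "\<And>j. H j \<in> row_space A"
  shows "cspan (row_space A \<union> coord_vec ` free_columns H) = FS"
proof
  let ?V = "cspan (row_space A \<union> coord_vec ` free_columns H)"
  show "?V \<subseteq> FS"
    using row_space_subset_FS[OF assms(1)] fin_supp_coord_vec subspace_FS
    by (intro cvs.span_minimal) (auto simp: FS_def)
  have coord_in_V: "coord_vec k \<in> ?V" for k
  proof (cases "k \<in> free_columns H")
    case True
    then show ?thesis by (intro cvs.span_base) auto
  next
    case False
    then obtain j where j: "j \<in> nonzero_rows H" "k = len (H j)"
      by (auto simp: free_columns_def)
    let ?T = "{t. H j t \<noteq> 0} - {k}"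
    have pivot: "H j k = 1" and fin: "finite {t. H j t \<noteq> 0}"
      using assms(2) j unfolding quasi_hermite_def row_finite_def by blast+
    have "H j = (\<Sum>t\<in>insert k ?T. cscale (H j t) (coord_vec t))"
      using fin by (intro coord_vec_expansion) auto
    also have "\<dots> = cscale (H j k) (coord_vec k) + (\<Sum>t\<in>?T. cscale (H j t) (coord_vec t))"
      by (rule sum.insert) (use fin in auto)
    also have "\<dots> = coord_vec k + (\<Sum>t\<in>?T. cscale (H j t) (coord_vec t))"
      using pivot by simp
    finally have "coord_vec k = H j - (\<Sum>t\<in>?T. cscale (H j t) (coord_vec t))"
      by (simp add: eq_diff_eq)
    moreover have "H j \<in> ?V" using H_rows by (intro cvs.span_base) auto
    moreover have "(\<Sum>t\<in>?T. cscale (H j t) (coord_vec t)) \<in> ?V"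
      using qh_offpivot_free[OF assms(2) j(1)] j(2)
      by (intro cvs.span_sum cvs.span_scale cvs.span_base) auto
    ultimately show ?thesis by (simp add: cvs.span_diff)
  qed
  show "FS \<subseteq> ?V"
  proof
    fix x assume "x \<in> FS"
    then have "x = (\<Sum>k\<in>{k. x k \<noteq> 0}. cscale (x k) (coord_vec k))"
      by (intro coord_vec_expansion) (auto simp: FS_def fin_supp_def)
    also have "\<dots> \<in> ?V" by (intro cvs.span_sum cvs.span_scale coord_in_V)
    finally show "x \<in> ?V" .
  qed
qed

lemma deficiency_le_free_columns:
  assumes "row_finite A" and "quasi_hermite H" and "\<And>j. H j \<in> row_space A"
    and "finite (free_columns H)"
  shows "deficiency A \<le> card (free_columns H)"
proof -
  have "deficiency A \<le> card (coord_vec ` free_columns H)"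
  proof (rule deficiency_le)
    show "finite (coord_vec ` free_columns H)" using assms(4) by simp
    show "coord_vec ` free_columns H \<subseteq> FS" using fin_supp_coord_vec by (auto simp: FS_def)
    show "cspan (row_space A \<union> coord_vec ` free_columns H) = FS"
      using assms(1-3) by (rule row_space_free_coords_span)
  qed
  also have "\<dots> \<le> card (free_columns H)" using assms(4) by (rule card_image_le)
  finally show ?thesis .
qed

theorem theorem5:
  fixes A Q H :: "nat \<Rightarrow> nat \<Rightarrow> complex"
    and S :: "nat set"
    and \<xi> :: "nat \<Rightarrow> nat \<Rightarrow> complex"
  assumes "row_finite A"
    and "finite_deficiency A"
    and "nonsingular Q"
    and "H = mmult Q A"
    and "quasi_hermite H"
    and "S = UNIV - (\<lambda>j. len (H j)) ` nonzero_rows H"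
    and "\<And>s. s \<in> S \<Longrightarrow> \<xi> s s = 1"
    and "\<And>s j. s \<in> S \<Longrightarrow> j \<in> nonzero_rows H \<Longrightarrow> \<xi> s (len (H j)) = - H j s"
    and "\<And>s t. s \<in> S \<Longrightarrow> t \<in> S \<Longrightarrow> t \<noteq> s \<Longrightarrow> \<xi> s t = 0"
  shows "finite S
    \<and> inj_on \<xi> S
    \<and> \<xi> ` S \<subseteq> RNS A
    \<and> cindependent (\<xi> ` S)
    \<and> cspan (\<xi> ` S) = RNS A
    \<and> (\<forall>x\<in>RNS A. x = (\<lambda>t. \<Sum>s\<in>S. x s * \<xi> s t))
    \<and> cdim (RNS A) = deficiency A
    \<and> deficiency A = card S"
proof -
  have S: "S = free_columns H" using assms(6) by (simp add: free_columns_def)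
  have RNS_H: "RNS H = RNS A" using RNS_nonsingular_mult[OF assms(3,1)] assms(4) by simp
  have delta: "\<xi> s t = (if t = s then 1 else 0)" if "s \<in> S" "t \<in> S" for s t
    using that assms(7,9) by auto
  have "\<xi> s \<in> RNS H" if "s \<in> S" for s
    by (rule xi_solution[OF assms(5)]) (use that delta assms(8) in \<open>simp_all add: S[symmetric]\<close>)
  then have sol: "\<xi> s \<in> RNS A" if "s \<in> S" for s
    using that RNS_H by blast
  have card_le: "card T \<le> deficiency A" if "T \<subseteq> S" "finite T" for T
    using \<open>finite T\<close>
  proof (rule card_le_deficiency[OF assms(1,2), where y = \<xi>])
    show "\<xi> t \<in> RNS A" if "t \<in> T" for t using that \<open>T \<subseteq> S\<close> sol by blast
    show "\<xi> t s = (if s = t then 1 else 0)" if "s \<in> T" "t \<in> T" for s t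
      using that \<open>T \<subseteq> S\<close> delta by blast
  qed
  have finS: "finite S" using finite_if_finite_subsets_card_bdd[OF card_le] by simp
  have expand: "x = (\<lambda>t. \<Sum>s\<in>S. x s * \<xi> s t)" if "x \<in> RNS A" for x
    unfolding S
    by (rule RNS_expansion[OF assms(5)]) (use finS that RNS_H delta assms(8) in \<open>simp_all add: S[symmetric]\<close>)
  have indep: "inj_on \<xi> S \<and> cindependent (\<xi> ` S)"
    using finS by (rule delta_family_independent) (simp add: delta)
  have span: "cspan (\<xi> ` S) = RNS A"
    by (rule span_eq_if_coordinate_expansion[OF subspace_RNS]) (use sol in blast, rule expand)
  have "deficiency A \<le> card S"
    unfolding S using deficiency_le_free_columns[OF assms(1,5)] mmult_row_in_row_space assms(4)
      finS S by simp
  then have defi: "deficiency A = card S" using card_le finS by (simp add: le_antisym)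
  have "cdim (RNS A) = card S"
    using cvs.dim_span_eq_card_independent[of "\<xi> ` S"] indep span card_image by metis
  then have dim: "cdim (RNS A) = deficiency A" using defi by simp
  show ?thesis using finS indep sol expand span dim defi by blast
qed

end
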